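(* With the substitutions and matrices in the context, the vector $\mathbf{x}$ satisfies \[ \mathbf{x}(p'_n\pi_1(\mathbf{c}))=\frac{1-a_0}{1-b_n}\,p'_n(M_{\pi_1})\,M_{p'_n}\,\mathbf{x}(\mathbf{c}),\qquad a_0=q^{-1}a_{n+1}. \]
   Context: Fix an integer $n\ge1$ and $q\in\mathbb{C}$ with $0<|q|<1$. Let $a_1,\ldots,a_{n+1},b_1,\ldots,b_n,c$ be generic complex parameters, and write $\mathbf{c}=(a_1,\ldots,a_{n+1},b_1,\ldots,b_n,c)$. Set $b_{n+1}=q$, and extend indices to all of $\mathbb{Z}$ by $a_{j+n+1}=q\,a_j$ and $b_{j+n+1}=q\,b_j$; in particular $a_0=q^{-1}a_{n+1}$ and $b_0=1$. Write $(a;q)_0=1$ and $(a;q)_k=(1-a)(1-qa)\cdots(1-q^{k-1}a)$. For $j=1,\ldots,n+1$ let \[ x_j(\mathbf{c})=\prod_{l=1}^{n-j+1}(1-a_l)\prod_{l=n-j+2}^{n}(1-b_l)\sum_{k=0}^\infty q^kc^k\prod_{l=1}^{n-j+1}\frac{(qa_l;q)_k}{(qb_l;q)_k}\prod_{l=n-j+2}^{n+1}\frac{(a_l;q)_k}{(b_l;q)_k}, \] which converges for $|c|<|q|^{-1}$, and set $\mathbf{x}=(x_1,\ldots,x_{n+1})^T$. Let $E_{j_1,j_2}$ denote the $(n+1)\times(n+1)$ matrix unit. For a parameter $u$, $c^{\log_q u}$ means $\exp(\log c\,\log u/\log q)$ for fixed branches. Substitutions. Each symbol $\omega$ below denotes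 a substitution $\mathbf{c}\mapsto\omega(\mathbf{c})$, specified by the images of $a_j$ ($1\le j\le n+1$), $b_j$ ($1\le j\le n$) and $c$. Right-hand sides are read using the quasi-periodic convention; the same formulas then hold for all $j$, and $b_{n+1}=q$ stays fixed. For $i\in\mathbb{Z}$ let $t_i$ be the permutation of $\mathbb{Z}$ exchanging $i+k(n+1)$ and $i+1+k(n+1)$ for every $k\in\mathbb{Z}$ and fixing all other integers. - $p'_n$: $a_j\mapsto qa_j/b_n$, $b_j\mapsto qb_{t_n(j)}/b_n$, $c\mapsto c$. - $\pi_1$: $a_j\mapsto qa_{j-1}/b_n$, $b_j\mapsto qb_{j-1}/b_n$, $c\mapsto c$. For a function or matrix $\Phi(\mathbf{c})$, $\omega(\Phi)$ denotes $\Phi(\omega(\mathbf{c}))$. Compositions are defined by $(\omega_2\omega_1)(\Phi)=\omega_2(\omega_1(\Phi))$, i.e. $\omega_2\omega_1(\mathbf{c})$ is $\omega_1(\mathbf{c})$ with $\mathbf{c}$ replaced by $\omega_2(\mathbf{c})$. Matrices: - $M_{p'_n}=c^{\log_q(q^{-1}b_n)}\Bigl(\frac{b_n-a_{n+1}}{b_{n+1}-a_{n+1}}E_{1,1}+\sum_{j=2}^{n+1}E_{j,j}+\frac{b_{n+1}-b_n}{b_{n+1}-a_{n+1}}q^{-1}c^{-1}E_{1,n+1}\Bigr)$. - $M_{\pi_1}=c^{\log_q(q^{-1}b_n)}\Bigl(\sum_{j=1}^nE_{j,j+1}+qc\,E_{n+1,1}\Bigr)$. *)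

theory Defs
  imports "HOL-Analysis.Analysis"
begin

text \<open>Parameter tuples: a pair (a, b) of functions; only a 1, ..., a (n+1) and
  b 1, ..., b n are meaningful (b (n+1) = q is enforced by bfull).
  The parameter c is kept separately (it is not changed by the substitutions).\<close>

type_synonym params = "(nat \<Rightarrow> complex) \<times> (nat \<Rightarrow> complex)"

definition qpoch :: "complex \<Rightarrow> complex \<Rightarrow> nat \<Rightarrow> complex" where
  "qpoch a q k = (\<Prod>i<k. 1 - q ^ i * a)"

definition bfull :: "nat \<Rightarrow> complex \<Rightarrow> (nat \<Rightarrow> complex) \<Rightarrow> nat \<Rightarrow> complex" where
  "bfull n q b = b(Suc n := q)"

text \<open>Quasi-periodic extension to all integers: f_(j+n+1) = q f_j\<close>
definition qext :: "nat \<Rightarrow> complex \<Rightarrow> (nat \<Rightarrow> complex) \<Rightarrow> int \<Rightarrow> complex" where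
  "qext n q f j = (let m = int n + 1; r = (j - 1) mod m + 1
                   in q powi ((j - r) div m) * f (nat r))"

definition tperm :: "nat \<Rightarrow> int \<Rightarrow> int \<Rightarrow> int" where
  "tperm n i j = (if j mod (int n + 1) = i mod (int n + 1) then j + 1
                  else if j mod (int n + 1) = (i + 1) mod (int n + 1) then j - 1
                  else j)"

text \<open>c^(log_q u) = exp(log c * log u / log q), principal branches\<close>
definition qcpow :: "complex \<Rightarrow> complex \<Rightarrow> complex \<Rightarrow> complex" where
  "qcpow q c u = exp (Ln c * Ln u / Ln q)"

definition xfun :: "nat \<Rightarrow> complex \<Rightarrow> params \<Rightarrow> complex \<Rightarrow> nat \<Rightarrow> complex" where
  "xfun n q p c j =
     (let a = fst p; b = bfull n q (snd p) in
      (\<Prod>l = 1..n + 1 - j. 1 - a l) * (\<Prod>l = n + 2 - j..n. 1 - b l) *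
      (\<Sum>k. q ^ k * c ^ k *
         (\<Prod>l = 1..n + 1 - j. qpoch (q * a l) q k / qpoch (q * b l) q k) *
         (\<Prod>l = n + 2 - j..n + 1. qpoch (a l) q k / qpoch (b l) q k)))"

definition subst_pn :: "nat \<Rightarrow> complex \<Rightarrow> params \<Rightarrow> params" where
  "subst_pn n q p =
     (let a = fst p; b = snd p in
      (\<lambda>j. q * a j / b n,
       \<lambda>j. q * qext n q (bfull n q b) (tperm n (int n) (int j)) / b n))"

definition subst_pi1 :: "nat \<Rightarrow> complex \<Rightarrow> params \<Rightarrow> params" where
  "subst_pi1 n q p =
     (let a = fst p; b = snd p in
      (\<lambda>j. q * qext n q a (int j - 1) / b n,
       \<lambda>j. q * qext n q (bfull n q b) (int j - 1) / b n))"

text \<open>(n+1)x(n+1) matrices as functions on indices 1..n+1\<close>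
definition mat_mult :: "nat \<Rightarrow> (nat \<Rightarrow> nat \<Rightarrow> complex) \<Rightarrow> (nat \<Rightarrow> nat \<Rightarrow> complex) \<Rightarrow> nat \<Rightarrow> nat \<Rightarrow> complex" where
  "mat_mult n A B i j = (\<Sum>k = 1..n + 1. A i k * B k j)"

definition mat_vec :: "nat \<Rightarrow> (nat \<Rightarrow> nat \<Rightarrow> complex) \<Rightarrow> (nat \<Rightarrow> complex) \<Rightarrow> nat \<Rightarrow> complex" where
  "mat_vec n A v i = (\<Sum>k = 1..n + 1. A i k * v k)"

definition Eu :: "nat \<Rightarrow> nat \<Rightarrow> nat \<Rightarrow> nat \<Rightarrow> complex" where
  "Eu j1 j2 i j = (if i = j1 \<and> j = j2 then 1 else 0)"

definition M_pn :: "nat \<Rightarrow> complex \<Rightarrow> params \<Rightarrow> complex \<Rightarrow> nat \<Rightarrow> nat \<Rightarrow> complex" where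
  "M_pn n q p c i j =
     (let a = fst p; b = bfull n q (snd p) in
      qcpow q c (b n / q) *
      ((b n - a (n + 1)) / (b (n + 1) - a (n + 1)) * Eu 1 1 i j
       + (\<Sum>l = 2..n + 1. Eu l l i j)
       + (b (n + 1) - b n) / (b (n + 1) - a (n + 1)) * inverse q * inverse c * Eu 1 (n + 1) i j))"

definition M_pi1 :: "nat \<Rightarrow> complex \<Rightarrow> params \<Rightarrow> complex \<Rightarrow> nat \<Rightarrow> nat \<Rightarrow> complex" where
  "M_pi1 n q p c i j =
     (let b = bfull n q (snd p) in
      qcpow q c (b n / q) *
      ((\<Sum>l = 1..n. Eu l (l + 1) i j) + q * c * Eu (n + 1) 1 i j))"

end

theory Submission
  imports Defs
begin

text \<open>
  The composite substitution p'_n pi_1 acts on the parameters entering the x_j as the cyclic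
  rotation (a_1, ..., a_(n+1)) \<mapsto> (a_(n+1)/q, a_1, ..., a_n), (b_1, ..., b_n) \<mapsto>
  (b_n/q, b_1, ..., b_(n-1)), and the scalar factors c^(log_q u) of the two matrices cancel.
  For j \<le> n the rotated series of x_j is termwise the series of x_(j+1); only the prefactor
  changes, by (1 - a_0)/(1 - b_n). For j = n + 1, with a = a_(n+1), the rotated x_(n+1), x_(n+1)
  and x_1 share a summand, multiplied respectively by (a/q;q)_k/(b_n/q;q)_k, (a;q)_k/(b_n;q)_k
  and, after shifting the index by one, (a;q)_k/(b_n;q)_(k+1). The identity
  (b_n - a)(1 - q^(k+1)) + (q - b_n)(1 - q^k a) = (q - a)(1 - q^k b_n)
  makes the first series a termwise combination of the other two, which is the last row of the
  matrix identity.
\<close>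

section \<open>The composite substitution\<close>

lemma qext_of_nat: "1 \<le> j \<Longrightarrow> j \<le> n + 1 \<Longrightarrow> qext n q f (int j) = f j"
  unfolding qext_def Let_def by (simp add: mod_pos_pos_trivial)

lemma qext_zero: "qext n q f 0 = inverse q * f (n + 1)"
proof -
  have e: "- int n - 1 = (-1) * (int n + 1)" by simp
  have "(- int n - 1) div (int n + 1) = -1"
    unfolding e by (subst nonzero_mult_div_cancel_right) auto
  then show ?thesis
    unfolding qext_def Let_def by (simp add: zmod_minus1 power_int_minus nat_add_distrib)
qed

definition rotate_params :: "nat \<Rightarrow> complex \<Rightarrow> params \<Rightarrow> params" where
  "rotate_params n q p =
     (\<lambda>l. if l = 1 then fst p (n + 1) / q else fst p (l - 1),
      \<lambda>l. if l = 1 then snd p n / q else snd p (l - 1))"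

lemma snd_subst_pn:
  "snd (subst_pn n q (a, b)) n = q * q / b n"
  "1 \<le> l \<Longrightarrow> l < n \<Longrightarrow> snd (subst_pn n q (a, b)) l = q * b l / b n"
proof -
  have "qext n q (bfull n q b) (int n + 1) = q"
    using qext_of_nat[of "Suc n" n q "bfull n q b"] by (simp add: bfull_def add.commute)
  then show "snd (subst_pn n q (a, b)) n = q * q / b n"
    unfolding subst_pn_def tperm_def Let_def by simp
  show "1 \<le> l \<Longrightarrow> l < n \<Longrightarrow> snd (subst_pn n q (a, b)) l = q * b l / b n"
    unfolding subst_pn_def tperm_def Let_def
    by (simp add: mod_pos_pos_trivial qext_of_nat bfull_def)
qed

lemma subst_pi1_subst_pn_eq_rotate_params:
  assumes "q \<noteq> 0" "b n \<noteq> 0"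
  shows "l \<in> {1..n + 1} \<Longrightarrow>
           fst (subst_pi1 n q (subst_pn n q (a, b))) l = fst (rotate_params n q (a, b)) l"
    and "l \<in> {1..n} \<Longrightarrow>
           snd (subst_pi1 n q (subst_pn n q (a, b))) l = snd (rotate_params n q (a, b)) l"
proof -
  let ?p = "subst_pn n q (a, b)"
  have fst_p: "fst ?p = (\<lambda>j. q * a j / b n)"
    by (simp add: subst_pn_def)
  have fst_pi: "fst (subst_pi1 n q ?p) l = q * qext n q (fst ?p) (int l - 1) / (q * q / b n)" for l
    by (simp add: subst_pi1_def snd_subst_pn)
  show "l \<in> {1..n + 1} \<Longrightarrow> fst (subst_pi1 n q ?p) l = fst (rotate_params n q (a, b)) l"
  proof (cases "l = 1")
    case True
    then show ?thesis
      using assms by (simp add: fst_pi fst_p qext_zero rotate_params_def field_simps)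
  next
    case False
    assume "l \<in> {1..n + 1}"
    then have "qext n q (fst ?p) (int l - 1) = q * a (l - 1) / b n"
      using qext_of_nat[of "l - 1" n q "fst ?p"] False by (auto simp: of_nat_diff fst_p)
    then show ?thesis
      using assms False by (simp add: fst_pi rotate_params_def field_simps)
  qed
  have snd_pi: "snd (subst_pi1 n q ?p) l = q * qext n q (bfull n q (snd ?p)) (int l - 1) / (q * q / b n)" for l
    by (simp add: subst_pi1_def snd_subst_pn)
  show "l \<in> {1..n} \<Longrightarrow> snd (subst_pi1 n q ?p) l = snd (rotate_params n q (a, b)) l"
  proof (cases "l = 1")
    case True
    assume "l \<in> {1..n}"
    then show ?thesis
      using assms True by (simp add: snd_pi qext_zero bfull_def snd_subst_pn rotate_params_def field_simps)
  next
    case False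
    assume "l \<in> {1..n}"
    then have "qext n q (bfull n q (snd ?p)) (int l - 1) = q * b (l - 1) / b n"
      using qext_of_nat[of "l - 1" n q "bfull n q (snd ?p)"] False
      by (auto simp: of_nat_diff bfull_def snd_subst_pn)
    then show ?thesis
      using assms False by (simp add: snd_pi rotate_params_def field_simps)
  qed
qed

lemma xfun_cong:
  assumes "\<And>l. l \<in> {1..n + 1} \<Longrightarrow> fst p l = fst p' l"
    and "\<And>l. l \<in> {1..n} \<Longrightarrow> snd p l = snd p' l"
    and "j \<le> n + 1"
  shows "xfun n q p c j = xfun n q p' c j"
proof -
  have "bfull n q (snd p) l = bfull n q (snd p') l" if "l \<in> {1..n + 1}" for l
    using assms(2) that by (auto simp: bfull_def)
  then show ?thesis
    unfolding xfun_def Let_def using assms(1,3)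
    by (intro arg_cong2[where f = "(*)"] arg_cong[where f = suminf] ext prod.cong refl) auto
qed

lemma mat_vec_mat_mult: "mat_vec n (mat_mult n A B) v i = mat_vec n A (mat_vec n B v) i"
  unfolding mat_vec_def mat_mult_def sum_distrib_left sum_distrib_right mult.assoc
  by (rule sum.swap)

lemma sum_Eu:
  assumes "finite S"
  shows "(\<Sum>l\<in>S. Eu l (f l) i k) = (if i \<in> S \<and> k = f i then 1 else 0)"
proof -
  have "(\<Sum>l\<in>S. Eu l (f l) i k) = (\<Sum>l\<in>S. if l = i then (if k = f i then 1 else 0) else 0)"
    by (rule sum.cong) (auto simp: Eu_def)
  then show ?thesis
    using assms by simp
qed

lemma mat_vec_M_pn:
  assumes "1 \<le> n" "i \<in> {1..n + 1}"
  shows "mat_vec n (M_pn n q (a, b) c) v i =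
         qcpow q c (b n / q) *
         (if i = 1 then (b n - a (n + 1)) / (q - a (n + 1)) * v 1
                        + (q - b n) / (q - a (n + 1)) * inverse q * inverse c * v (n + 1)
          else v i)"
proof -
  define s where "s = qcpow q c (b n / q)"
  define \<alpha> where "\<alpha> = (b n - a (n + 1)) / (q - a (n + 1))"
  define \<beta> where "\<beta> = (q - b n) / (q - a (n + 1)) * inverse q * inverse c"
  have "M_pn n q (a, b) c i k * v k =
        (if i = 1 then (if k = 1 then s * \<alpha> * v 1 else 0) + (if k = n + 1 then s * \<beta> * v (n + 1) else 0)
         else if k = i then s * v i else 0)" for k
    unfolding M_pn_def Let_def sum_Eu[OF finite_atLeastAtMost]
    using assms by (auto simp: Eu_def s_def \<alpha>_def \<beta>_def bfull_def)
  then show ?thesis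
    using assms by (simp add: mat_vec_def sum.distrib s_def \<alpha>_def \<beta>_def distrib_left mult.assoc)
qed

lemma mat_vec_M_pi1:
  assumes "1 \<le> n" "i \<in> {1..n + 1}"
  shows "mat_vec n (M_pi1 n q p c) v i =
         qcpow q c (bfull n q (snd p) n / q) * (if i \<le> n then v (i + 1) else q * c * v 1)"
proof -
  define s where "s = qcpow q c (bfull n q (snd p) n / q)"
  have "M_pi1 n q p c i k * v k =
        (if i \<le> n then (if k = i + 1 then s * v (i + 1) else 0)
         else if k = 1 then s * (q * c * v 1) else 0)" for k
    unfolding M_pi1_def Let_def sum_Eu[OF finite_atLeastAtMost]
    using assms by (auto simp: Eu_def s_def)
  then show ?thesis
    using assms by (simp add: mat_vec_def s_def)
qed

lemma qcpow_inverse: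
  assumes "u \<notin> \<real>\<^sub>\<le>\<^sub>0"
  shows "qcpow q c (inverse u) * qcpow q c u = 1"
  using Ln_inverse[OF assms] by (simp add: qcpow_def exp_add[symmetric] field_simps)

section \<open>Series of q-Pochhammer quotients\<close>

lemma qpoch_0 [simp]: "qpoch x q 0 = 1"
  by (simp add: qpoch_def)

lemma qpoch_Suc: "qpoch x q (Suc k) = qpoch x q k * (1 - q ^ k * x)"
  by (simp add: qpoch_def)

lemma qpoch_Suc_shift: "qpoch x q (Suc k) = (1 - x) * qpoch (q * x) q k"
  unfolding qpoch_def prod.lessThan_Suc_shift by (simp add: mult_ac)

lemma qpoch_nonzero: "(\<And>i. i < k \<Longrightarrow> 1 - q ^ i * x \<noteq> 0) \<Longrightarrow> qpoch x q k \<noteq> 0"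
  by (simp add: qpoch_def)

lemma summable_of_ratio_tendsto:
  fixes f r :: "nat \<Rightarrow> 'a::{banach, real_normed_div_algebra}"
  assumes rec: "\<And>k. f (Suc k) = r k * f k" and lim: "r \<longlonglongrightarrow> z" and "norm z < 1"
  shows "summable f"
proof -
  define c where "c = (1 + norm z) / 2"
  have "c < 1" "norm z < c"
    using \<open>norm z < 1\<close> by (auto simp: c_def)
  have "eventually (\<lambda>k. norm (r k) < c) sequentially"
    using tendsto_norm[OF lim] \<open>norm z < c\<close> by (rule order_tendstoD)
  then obtain N where N: "\<And>k. k \<ge> N \<Longrightarrow> norm (r k) < c"
    by (auto simp: eventually_sequentially)
  show ?thesis
  proof (rule summable_ratio_test[OF \<open>c < 1\<close>])
    fix k
    assume "k \<ge> N"
    then show "norm (f (Suc k)) \<le> c * norm (f k)"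
      using N[of k] by (simp add: rec norm_mult mult_right_mono)
  qed
qed

lemma tendsto_qpoch_factor_ratio:
  fixes q :: complex
  assumes "norm q < 1"
  shows "(\<lambda>k. (1 - q ^ k * x) / (1 - q ^ k * y)) \<longlonglongrightarrow> 1"
proof -
  have "(\<lambda>k. (1 - q ^ k * x) / (1 - q ^ k * y)) \<longlonglongrightarrow> (1 - 0 * x) / (1 - 0 * y)"
    using LIMSEQ_power_zero[OF assms] assms by (intro tendsto_intros) auto
  then show ?thesis
    by simp
qed

lemma qpoch_quotient_Suc:
  "qpoch x q (Suc k) / qpoch y q (Suc k) = (1 - q ^ k * x) / (1 - q ^ k * y) * (qpoch x q k / qpoch y q k)"
  by (simp add: qpoch_Suc ac_simps)

lemma summable_qpoch_series:
  fixes u v u' v' :: "nat \<Rightarrow> complex"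
  assumes "finite I" "finite J" "norm q < 1" "norm z < 1"
  shows "summable (\<lambda>k. z ^ k * (\<Prod>l\<in>I. qpoch (u l) q k / qpoch (v l) q k)
                              * (\<Prod>l\<in>J. qpoch (u' l) q k / qpoch (v' l) q k))"
proof (rule summable_of_ratio_tendsto)
  show "z ^ Suc k * (\<Prod>l\<in>I. qpoch (u l) q (Suc k) / qpoch (v l) q (Suc k))
          * (\<Prod>l\<in>J. qpoch (u' l) q (Suc k) / qpoch (v' l) q (Suc k))
        = (z * (\<Prod>l\<in>I. (1 - q ^ k * u l) / (1 - q ^ k * v l))
             * (\<Prod>l\<in>J. (1 - q ^ k * u' l) / (1 - q ^ k * v' l)))
          * (z ^ k * (\<Prod>l\<in>I. qpoch (u l) q k / qpoch (v l) q k)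
             * (\<Prod>l\<in>J. qpoch (u' l) q k / qpoch (v' l) q k))" for k
    by (simp only: qpoch_quotient_Suc prod.distrib power_Suc mult_ac)
  have "(\<lambda>k. z * (\<Prod>l\<in>I. (1 - q ^ k * u l) / (1 - q ^ k * v l))
               * (\<Prod>l\<in>J. (1 - q ^ k * u' l) / (1 - q ^ k * v' l)))
        \<longlonglongrightarrow> z * (\<Prod>l\<in>I. 1) * (\<Prod>l\<in>J. 1)"
    using tendsto_qpoch_factor_ratio[OF assms(3)] by (intro tendsto_intros)
  then show "(\<lambda>k. z * (\<Prod>l\<in>I. (1 - q ^ k * u l) / (1 - q ^ k * v l))
               * (\<Prod>l\<in>J. (1 - q ^ k * u' l) / (1 - q ^ k * v' l))) \<longlonglongrightarrow> z"
    by simp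
qed (use assms(4) in simp)

lemma sums_xfun:
  assumes "norm q < 1" "norm (q * c) < 1"
  shows "(\<lambda>k. (\<Prod>l = 1..n + 1 - j. 1 - a l) * (\<Prod>l = n + 2 - j..n. 1 - bfull n q b l) *
           (q ^ k * c ^ k * (\<Prod>l = 1..n + 1 - j. qpoch (q * a l) q k / qpoch (q * bfull n q b l) q k) *
            (\<Prod>l = n + 2 - j..n + 1. qpoch (a l) q k / qpoch (bfull n q b l) q k)))
         sums xfun n q (a, b) c j"
proof -
  have "summable (\<lambda>k. (q * c) ^ k * (\<Prod>l = 1..n + 1 - j. qpoch (q * a l) q k / qpoch (q * bfull n q b l) q k) *
            (\<Prod>l = n + 2 - j..n + 1. qpoch (a l) q k / qpoch (bfull n q b l) q k))"
    using assms by (intro summable_qpoch_series) auto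
  then show ?thesis
    unfolding xfun_def Let_def fst_conv snd_conv
    by (intro sums_mult) (simp add: power_mult_distrib summable_sums)
qed

lemma qpoch_quotient_shift:
  assumes "y \<noteq> 1"
  shows "(1 - x) * (qpoch (q * x) q k / qpoch (q * y) q k) = (1 - y) * (qpoch x q (Suc k) / qpoch y q (Suc k))"
  using assms by (cases "qpoch (q * y) q k = 0") (simp_all add: qpoch_Suc_shift field_simps)

lemma prod_qpoch_quotient_shift:
  assumes "\<And>l. l \<in> S \<Longrightarrow> v l \<noteq> 1"
  shows "(\<Prod>l\<in>S. 1 - u l) * (\<Prod>l\<in>S. qpoch (q * u l) q k / qpoch (q * v l) q k)
         = (\<Prod>l\<in>S. 1 - v l) * (\<Prod>l\<in>S. qpoch (u l) q (Suc k) / qpoch (v l) q (Suc k))"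
  unfolding prod.distrib[symmetric] using assms by (intro prod.cong refl qpoch_quotient_shift)

lemma one_minus_power_Suc_nonzero:
  fixes q :: "'a::real_normed_div_algebra"
  assumes "norm q < 1"
  shows "1 - q ^ k * q \<noteq> 0"
proof
  assume "1 - q ^ k * q = 0"
  then have "q ^ Suc k = 1"
    by (metis power_Suc2 right_minus_eq)
  then have "norm q ^ Suc k = 1"
    by (metis norm_one norm_power)
  moreover have "norm q ^ Suc k < 1"
    using assms power_less_one_iff[of "norm q" "Suc k"] by simp
  ultimately show False
    by simp
qed

section \<open>The contiguous relation\<close>

lemma sums_combination_Suc:
  fixes G N T :: "nat \<Rightarrow> 'a::real_normed_field"
  assumes "G sums SG" "N sums SN"
    and "\<And>k. T (Suc k) = K * (\<alpha> * G k + \<beta> * N (Suc k))" "T 0 = K * \<beta> * N 0"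
  shows "T sums (K * (\<alpha> * SG + \<beta> * SN))"
proof -
  have "(\<lambda>k. N (Suc k)) sums (SN - N 0)"
    using assms(2) by (subst sums_Suc_iff) simp
  then have "(\<lambda>k. T (Suc k)) sums (K * (\<alpha> * SG + \<beta> * (SN - N 0)))"
    unfolding assms(3) by (intro sums_mult sums_add assms(1))
  then have "T sums (K * (\<alpha> * SG + \<beta> * (SN - N 0)) + T 0)"
    by (subst sums_Suc_iff[symmetric])
  then show ?thesis
    using assms(4) by (simp add: algebra_simps)
qed

lemma contiguous_relation_term:
  fixes q u v x F P D :: complex
  assumes "q \<noteq> 0" "u \<noteq> q" "v \<noteq> q" "v \<noteq> 1" "1 - x * v \<noteq> 0" "D \<noteq> 0"
  shows "(1 - v / q) * F * ((1 - u / q) * P / ((1 - v / q) * D)) =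
         (1 - u / q) / (1 - v) *
         ((v - u) / (q - u) * ((1 - v) * F * (1 - x * q) * (P / (D * (1 - x * v))))
          + (q - v) / (q - u) * ((1 - v) * F * (P * (1 - x * u) / (D * (1 - x * v)))))"
proof -
  define w where "w = F * P / (D * (1 - x * v))"
  have nz: "q - u \<noteq> 0" "1 - v \<noteq> 0" "1 - v / q \<noteq> 0"
    using assms by (auto simp: field_simps)
  have key: "(v - u) * (1 - x * q) + (q - v) * (1 - x * u) = (q - u) * (1 - x * v)"
    by (simp add: algebra_simps)
  have "(v - u) / (q - u) * ((1 - v) * (1 - x * q) * w) + (q - v) / (q - u) * ((1 - v) * (1 - x * u) * w)
        = ((v - u) * (1 - x * q) + (q - v) * (1 - x * u)) / (q - u) * ((1 - v) * w)"
    by (simp add: divide_inverse algebra_simps)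
  also have "\<dots> = (1 - x * v) * ((1 - v) * w)"
    using nz by (simp only: key) simp
  finally have "(1 - u / q) / (1 - v) *
                  ((v - u) / (q - u) * ((1 - v) * (1 - x * q) * w)
                   + (q - v) / (q - u) * ((1 - v) * (1 - x * u) * w))
                = (1 - u / q) * (1 - x * v) * w"
    using nz by simp
  moreover have "(1 - v / q) * F * ((1 - u / q) * P / ((1 - v / q) * D)) = (1 - u / q) * (1 - x * v) * w"
    using nz assms by (simp add: w_def field_simps)
  ultimately show ?thesis
    by (simp add: w_def mult_ac)
qed

lemma qpoch_series_contiguous:
  fixes F :: "nat \<Rightarrow> complex"
  assumes "q \<noteq> 0" "u \<noteq> q" "v \<noteq> q" "\<And>k. 1 - q ^ k * v \<noteq> 0"
    and "(\<lambda>k. (1 - v) * F (Suc k) * (1 - q ^ Suc k) * (qpoch u q k / qpoch v q (Suc k))) sums SG"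
    and "(\<lambda>k. (1 - v) * F k * (qpoch u q k / qpoch v q k)) sums SN"
  shows "(\<lambda>k. (1 - v / q) * F k * (qpoch (u / q) q k / qpoch (v / q) q k)) sums
         ((1 - u / q) / (1 - v) * ((v - u) / (q - u) * SG + (q - v) / (q - u) * SN))"
proof -
  have "v \<noteq> 1"
    using assms(4)[of 0] by auto
  show ?thesis
  proof (rule sums_combination_Suc[OF assms(5,6)])
    fix k
    have "qpoch v q k \<noteq> 0"
      using assms(4) by (rule qpoch_nonzero)
    have shift: "qpoch (w / q) q (Suc k) = (1 - w / q) * qpoch w q k" for w
      using assms(1) by (simp add: qpoch_Suc_shift)
    show "(1 - v / q) * F (Suc k) * (qpoch (u / q) q (Suc k) / qpoch (v / q) q (Suc k)) =
      (1 - u / q) / (1 - v) *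
      ((v - u) / (q - u) * ((1 - v) * F (Suc k) * (1 - q ^ Suc k) * (qpoch u q k / qpoch v q (Suc k)))
       + (q - v) / (q - u) * ((1 - v) * F (Suc k) * (qpoch u q (Suc k) / qpoch v q (Suc k))))"
      unfolding shift qpoch_Suc[of u] qpoch_Suc[of v] power_Suc2
      by (rule contiguous_relation_term) (use assms(1-4) \<open>v \<noteq> 1\<close> \<open>qpoch v q k \<noteq> 0\<close> in auto)
  next
    have cancel: "A / (1 - v) * B * ((1 - v) * C) = A * B * C" for A B C :: complex
      using \<open>v \<noteq> 1\<close> by (simp add: field_simps)
    have factor: "(1 - u / q) * ((q - v) / (q - u)) = 1 - v / q"
      using assms(1,2) by (simp add: field_simps)
    show "(1 - v / q) * F 0 * (qpoch (u / q) q 0 / qpoch (v / q) q 0) =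
      (1 - u / q) / (1 - v) * ((q - v) / (q - u)) * ((1 - v) * F 0 * (qpoch u q 0 / qpoch v q 0))"
      by (simp only: qpoch_0 div_by_1 mult_1_right cancel factor)
  qed
qed

lemma prod_atLeast1_Suc: "(\<Prod>l = 1..Suc k. f l) = f 1 * (\<Prod>l = 1..k. f (Suc l))"
  by (simp add: prod.atLeast1_atMost_eq prod.lessThan_Suc_shift del: prod.cl_ivl_Suc prod.lessThan_Suc)

lemma rotate_params_prefactor:
  assumes "1 \<le> j" "j \<le> n"
  shows "(\<Prod>l = 1..n + 1 - j. 1 - fst (rotate_params n q (a, b)) l)
         * (\<Prod>l = n + 2 - j..n. 1 - bfull n q (snd (rotate_params n q (a, b))) l) * (1 - b n)
         = (1 - a (n + 1) / q) * ((\<Prod>l = 1..n - j. 1 - a l) * (\<Prod>l = n + 1 - j..n. 1 - bfull n q b l))"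
proof -
  obtain m where n: "n = Suc m"
    using assms by (cases n) auto
  obtain J where J: "J \<le> m" "n + 1 - j = Suc J" "n + 2 - j = Suc (Suc J)" "n - j = J" "n + 1 - j = Suc J"
    using assms n by (intro that[of "n - j"]) auto
  have "(\<Prod>l = 1..Suc J. 1 - fst (rotate_params n q (a, b)) l) = (1 - a (n + 1) / q) * (\<Prod>l = 1..J. 1 - a l)"
    unfolding prod_atLeast1_Suc by (auto simp: rotate_params_def intro!: prod.cong)
  moreover have "(\<Prod>l = Suc (Suc J)..n. 1 - bfull n q (snd (rotate_params n q (a, b))) l)
                 = (\<Prod>l = Suc J..m. 1 - b l)"
    unfolding n prod.shift_bounds_cl_Suc_ivl using J(1)
    by (auto simp: rotate_params_def bfull_def intro!: prod.cong)
  moreover have "(\<Prod>l = Suc J..n. 1 - bfull n q b l) = (\<Prod>l = Suc J..m. 1 - b l) * (1 - b n)"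
  proof -
    have "(\<Prod>l = Suc J..m. 1 - bfull n q b l) = (\<Prod>l = Suc J..m. 1 - b l)"
      using n by (intro prod.cong) (auto simp: bfull_def)
    then show ?thesis
      using J(1) n by (simp add: bfull_def)
  qed
  ultimately show ?thesis
    unfolding J(2-5) by (simp add: mult_ac)
qed

lemma rotate_params_series_term:
  assumes "q \<noteq> 0" "1 \<le> j" "j \<le> n"
  shows "(\<Prod>l = 1..n + 1 - j. qpoch (q * fst (rotate_params n q (a, b)) l) q k
                                / qpoch (q * bfull n q (snd (rotate_params n q (a, b))) l) q k)
         * (\<Prod>l = n + 2 - j..n + 1. qpoch (fst (rotate_params n q (a, b)) l) q k
                                      / qpoch (bfull n q (snd (rotate_params n q (a, b))) l) q k)
         = (\<Prod>l = 1..n - j. qpoch (q * a l) q k / qpoch (q * bfull n q b l) q k)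
           * (\<Prod>l = n + 1 - j..n + 1. qpoch (a l) q k / qpoch (bfull n q b l) q k)"
proof -
  obtain m where n: "n = Suc m"
    using assms by (cases n) auto
  obtain J where J: "J \<le> m" "n + 1 - j = Suc J" "n + 2 - j = Suc (Suc J)" "n - j = J"
    using assms n by (intro that[of "n - j"]) auto
  define A where "A = fst (rotate_params n q (a, b))"
  define B where "B = bfull n q (snd (rotate_params n q (a, b)))"
  have A: "A 1 = a (n + 1) / q" "\<And>l. 1 \<le> l \<Longrightarrow> A (Suc l) = a l"
    unfolding A_def by (simp_all add: rotate_params_def)
  have B: "B 1 = b n / q" "\<And>l. 1 \<le> l \<Longrightarrow> l \<le> m \<Longrightarrow> B (Suc l) = b l" "B (Suc n) = q"
    unfolding B_def using n by (simp_all add: rotate_params_def bfull_def)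
  have bf: "(\<Prod>l \<in> L. f l (bfull n q b l)) = (\<Prod>l \<in> L. f l (b l))" if "L \<subseteq> {..m}" for L f
    using that n by (intro prod.cong) (auto simp: bfull_def)
  have "(\<Prod>l = 1..Suc J. qpoch (q * A l) q k / qpoch (q * B l) q k)
        = qpoch (a (n + 1)) q k / qpoch (b n) q k * (\<Prod>l = 1..J. qpoch (q * a l) q k / qpoch (q * b l) q k)"
    unfolding prod_atLeast1_Suc using A B(1,2) J(1) assms(1) by (auto intro!: prod.cong)
  moreover have "(\<Prod>l = Suc (Suc J)..n + 1. qpoch (A l) q k / qpoch (B l) q k)
                 = (\<Prod>l = Suc J..m. qpoch (a l) q k / qpoch (b l) q k) * (qpoch (a n) q k / qpoch q q k)"
  proof -
    have "(\<Prod>l = Suc (Suc J)..Suc n. g l) = (\<Prod>l = Suc J..m. g (Suc l)) * g (Suc n)" for g :: "nat \<Rightarrow> complex"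
      using prod.shift_bounds_cl_Suc_ivl[of g "Suc J" n] J(1) n by simp
    moreover have "(\<Prod>l = Suc J..m. qpoch (A (Suc l)) q k / qpoch (B (Suc l)) q k)
                   = (\<Prod>l = Suc J..m. qpoch (a l) q k / qpoch (b l) q k)"
      using A(2) B(2) by (intro prod.cong) auto
    ultimately show ?thesis
      using A(2)[of n] B(3) n by (simp del: prod.cl_ivl_Suc)
  qed
  moreover have "(\<Prod>l = 1..J. qpoch (q * a l) q k / qpoch (q * bfull n q b l) q k)
                 = (\<Prod>l = 1..J. qpoch (q * a l) q k / qpoch (q * b l) q k)"
    using bf[of "{1..J}" "\<lambda>l x. qpoch (q * a l) q k / qpoch (q * x) q k"] J(1) by auto
  moreover have "(\<Prod>l = Suc J..m. qpoch (a l) q k / qpoch (bfull n q b l) q k)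
                 = (\<Prod>l = Suc J..m. qpoch (a l) q k / qpoch (b l) q k)"
    using bf[of "{Suc J..m}" "\<lambda>l x. qpoch (a l) q k / qpoch x q k"] by auto
  ultimately show ?thesis
    unfolding J(2-4) A_def[symmetric] B_def[symmetric]
    using J(1) n by (simp add: bfull_def times_divide_times_eq mult_ac)
qed

lemma xfun_rotate_params:
  assumes "q \<noteq> 0" "b n \<noteq> 1" "1 \<le> j" "j \<le> n"
  shows "xfun n q (rotate_params n q (a, b)) c j =
         (1 - a (n + 1) / q) / (1 - b n) * xfun n q (a, b) c (j + 1)"
proof -
  have "xfun n q (rotate_params n q (a, b)) c j * (1 - b n) = (1 - a (n + 1) / q) * xfun n q (a, b) c (j + 1)"
    using rotate_params_prefactor[OF assms(3,4), of q a b] rotate_params_series_term[OF assms(1,3,4), of a b]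
    unfolding xfun_def Let_def by (simp add: mult_ac)
  then show ?thesis
    using assms(2) by (simp add: field_simps)
qed

text \<open>The summand shared by x_1, x_(n+1) and the rotated x_(n+1), stripped of the factors
  involving a_(n+1) and b_n.\<close>

definition xfun_core ::
  "nat \<Rightarrow> complex \<Rightarrow> (nat \<Rightarrow> complex) \<Rightarrow> (nat \<Rightarrow> complex) \<Rightarrow> complex \<Rightarrow> nat \<Rightarrow> complex" where
  "xfun_core n q a b c k =
     (\<Prod>l = 1..n - 1. 1 - b l) *
     (q ^ k * c ^ k * (\<Prod>l = 1..n - 1. qpoch (a l) q k / qpoch (b l) q k) * (qpoch (a n) q k / qpoch q q k))"

lemma sums_xfun_last:
  assumes "n = Suc m" "norm q < 1" "norm (q * c) < 1"
  shows "(\<lambda>k. (1 - b n) * xfun_core n q a b c k * (qpoch (a (n + 1)) q k / qpoch (b n) q k))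
           sums xfun n q (a, b) c (n + 1)"
proof -
  have bf: "(\<Prod>l = 1..m. f l (bfull n q b l)) = (\<Prod>l = 1..m. f l (b l))" for f :: "nat \<Rightarrow> complex \<Rightarrow> complex"
    using assms(1) by (intro prod.cong) (auto simp: bfull_def)
  have "(\<Prod>l = 1..n. 1 - bfull n q b l) = (\<Prod>l = 1..m. 1 - b l) * (1 - b n)"
    using bf[of "\<lambda>_ x. 1 - x"] assms(1) by (simp add: bfull_def)
  moreover have "(\<Prod>l = 1..n + 1. qpoch (a l) q k / qpoch (bfull n q b l) q k) =
                 (\<Prod>l = 1..m. qpoch (a l) q k / qpoch (b l) q k) * (qpoch (a n) q k / qpoch (b n) q k)
                 * (qpoch (a (n + 1)) q k / qpoch q q k)" for k
    using bf[of "\<lambda>l x. qpoch (a l) q k / qpoch x q k"] assms(1) by (simp add: bfull_def)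
  ultimately have "(1 - b n) * xfun_core n q a b c k * (qpoch (a (n + 1)) q k / qpoch (b n) q k) =
        (\<Prod>l = 1..n. 1 - bfull n q b l) *
        (q ^ k * c ^ k * (\<Prod>l = 1..n + 1. qpoch (a l) q k / qpoch (bfull n q b l) q k))" for k
    using assms(1) by (simp add: xfun_core_def times_divide_times_eq mult_ac)
  then show ?thesis
    using sums_xfun[OF assms(2,3), where n = n and j = "n + 1" and a = a and b = b] by simp
qed

lemma sums_xfun_first:
  assumes "n = Suc m" "norm q < 1" "norm (q * c) < 1"
    and "\<And>l. l \<in> {1..n} \<Longrightarrow> b l \<noteq> 1" "\<And>k. 1 - q ^ k * b n \<noteq> 0"
  shows "(\<lambda>k. (1 - b n) * xfun_core n q a b c (Suc k) * (1 - q ^ Suc k)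
                * (qpoch (a (n + 1)) q k / qpoch (b n) q (Suc k)))
           sums (q * c * xfun n q (a, b) c 1)"
proof -
  define P where "P = (\<Prod>l = 1..m. 1 - b l)"
  define Q where "Q k = (\<Prod>l = 1..m. qpoch (a l) q k / qpoch (b l) q k)" for k
  have prods: "(\<Prod>l = 1..n. 1 - a l) * (\<Prod>l = 1..n. qpoch (q * a l) q k / qpoch (q * bfull n q b l) q k)
               = P * (1 - b n) * (Q (Suc k) * (qpoch (a n) q (Suc k) / qpoch (b n) q (Suc k)))" for k
  proof -
    have "(\<Prod>l = 1..n. qpoch (q * a l) q k / qpoch (q * bfull n q b l) q k)
          = (\<Prod>l = 1..n. qpoch (q * a l) q k / qpoch (q * b l) q k)"
      by (rule prod.cong) (auto simp: bfull_def)
    then show ?thesis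
      using prod_qpoch_quotient_shift[of "{1..n}" b a q k] assms(4)
      unfolding P_def Q_def assms(1) by simp
  qed
  have nz: "1 - q ^ k * q \<noteq> 0" "qpoch q q k \<noteq> 0" "qpoch (b n) q (Suc k) \<noteq> 0" for k
    using one_minus_power_Suc_nonzero[OF assms(2)] assms(5) by (auto intro!: qpoch_nonzero)
  have "q * c * ((\<Prod>l = 1..n. 1 - a l) *
          (q ^ k * c ^ k * (\<Prod>l = 1..n. qpoch (q * a l) q k / qpoch (q * bfull n q b l) q k)
           * (qpoch (a (n + 1)) q k / qpoch (bfull n q b (n + 1)) q k)))
        = (1 - b n) * xfun_core n q a b c (Suc k) * (1 - q ^ Suc k)
          * (qpoch (a (n + 1)) q k / qpoch (b n) q (Suc k))" for k
  proof -
    have "q * c * ((\<Prod>l = 1..n. 1 - a l) *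
            (q ^ k * c ^ k * (\<Prod>l = 1..n. qpoch (q * a l) q k / qpoch (q * bfull n q b l) q k)
             * (qpoch (a (n + 1)) q k / qpoch (bfull n q b (n + 1)) q k)))
          = q * c * q ^ k * c ^ k * (P * (1 - b n) * (Q (Suc k) * (qpoch (a n) q (Suc k) / qpoch (b n) q (Suc k))))
            * (qpoch (a (n + 1)) q k / qpoch q q k)"
      unfolding prods[symmetric] by (simp add: bfull_def mult_ac)
    also have "\<dots> = (1 - b n) * xfun_core n q a b c (Suc k) * (1 - q ^ Suc k)
                      * (qpoch (a (n + 1)) q k / qpoch (b n) q (Suc k))"
      using nz[of k] assms(1)
      by (simp add: xfun_core_def P_def Q_def qpoch_Suc[of q] power_Suc2 field_simps)
    finally show ?thesis .
  qed
  moreover have "(\<lambda>k. q * c * ((\<Prod>l = 1..n. 1 - a l) *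
          (q ^ k * c ^ k * (\<Prod>l = 1..n. qpoch (q * a l) q k / qpoch (q * bfull n q b l) q k)
           * (qpoch (a (n + 1)) q k / qpoch (bfull n q b (n + 1)) q k)))) sums (q * c * xfun n q (a, b) c 1)"
    using sums_mult[OF sums_xfun[OF assms(2,3), where n = n and j = 1 and a = a and b = b], of "q * c"]
    by simp
  ultimately show ?thesis
    by simp
qed

lemma sums_xfun_rotate_params_last:
  assumes "n = Suc m" "norm q < 1" "norm (q * c) < 1"
  shows "(\<lambda>k. (1 - b n / q) * xfun_core n q a b c k * (qpoch (a (n + 1) / q) q k / qpoch (b n / q) q k))
           sums xfun n q (rotate_params n q (a, b)) c (n + 1)"
proof -
  define A where "A = fst (rotate_params n q (a, b))"
  define B where "B = bfull n q (snd (rotate_params n q (a, b)))"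
  have A: "A 1 = a (n + 1) / q" "\<And>l. 1 \<le> l \<Longrightarrow> A (Suc l) = a l"
    by (simp_all add: A_def rotate_params_def)
  have B: "B 1 = b n / q" "\<And>l. 1 \<le> l \<Longrightarrow> l \<le> m \<Longrightarrow> B (Suc l) = b l" "B (Suc n) = q"
    using assms(1) by (simp_all add: B_def rotate_params_def bfull_def)
  have "(\<Prod>l = 1..m. 1 - B (Suc l)) = (\<Prod>l = 1..m. 1 - b l)"
    using B(2) by (intro prod.cong) auto
  then have "(\<Prod>l = 1..n. 1 - B l) = (1 - b n / q) * (\<Prod>l = 1..m. 1 - b l)"
    using prod_atLeast1_Suc[of "\<lambda>l. 1 - B l" m] B(1) assms(1) by simp
  moreover have "(\<Prod>l = 1..n + 1. qpoch (A l) q k / qpoch (B l) q k) =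
                 qpoch (a (n + 1) / q) q k / qpoch (b n / q) q k
                 * ((\<Prod>l = 1..m. qpoch (a l) q k / qpoch (b l) q k) * (qpoch (a n) q k / qpoch q q k))" for k
  proof -
    have "(\<Prod>l = 1..m. qpoch (A (Suc l)) q k / qpoch (B (Suc l)) q k)
          = (\<Prod>l = 1..m. qpoch (a l) q k / qpoch (b l) q k)"
      using A(2) B(2) by (intro prod.cong) auto
    then show ?thesis
      using prod_atLeast1_Suc[of "\<lambda>l. qpoch (A l) q k / qpoch (B l) q k" n] A B(1,3) assms(1) by simp
  qed
  ultimately have "(1 - b n / q) * xfun_core n q a b c k * (qpoch (a (n + 1) / q) q k / qpoch (b n / q) q k) =
        (\<Prod>l = 1..n. 1 - B l) * (q ^ k * c ^ k * (\<Prod>l = 1..n + 1. qpoch (A l) q k / qpoch (B l) q k))" for k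
    using assms(1) by (simp add: xfun_core_def mult_ac)
  then show ?thesis
    using sums_xfun[OF assms(2,3), where n = n and j = "n + 1" and a = A and b = "snd (rotate_params n q (a, b))"]
    by (simp add: A_def B_def)
qed

lemma xfun_rotate_params_last:
  assumes "1 \<le> n" "q \<noteq> 0" "norm q < 1" "norm (q * c) < 1"
    and "\<And>l. l \<in> {1..n} \<Longrightarrow> b l \<noteq> 1" "a (n + 1) \<noteq> q" "b n \<noteq> q" "\<And>k. 1 - q ^ k * b n \<noteq> 0"
  shows "xfun n q (rotate_params n q (a, b)) c (n + 1) =
         (1 - a (n + 1) / q) / (1 - b n) *
         ((b n - a (n + 1)) / (q - a (n + 1)) * (q * c * xfun n q (a, b) c 1)
          + (q - b n) / (q - a (n + 1)) * xfun n q (a, b) c (n + 1))"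
proof -
  obtain m where n: "n = Suc m"
    using assms(1) by (cases n) auto
  show ?thesis
    using sums_xfun_rotate_params_last[where a = a and b = b, OF n assms(3,4)]
      qpoch_series_contiguous[OF assms(2,6-8)
        sums_xfun_first[where a = a and b = b, OF n assms(3,4,5,8)]
        sums_xfun_last[where a = a and b = b, OF n assms(3,4)]]
    by (rule sums_unique2)
qed

lemma xfun_rotate_params_row:
  assumes "1 \<le> n" "q \<noteq> 0" "norm q < 1" "c \<noteq> 0" "norm (q * c) < 1"
    and "\<And>l. l \<in> {1..n} \<Longrightarrow> b l \<noteq> 1" "a (n + 1) \<noteq> q" "b n \<noteq> q" "\<And>k. 1 - q ^ k * b n \<noteq> 0"
    and "j \<in> {1..n + 1}"
  shows "xfun n q (rotate_params n q (a, b)) c j =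
         (1 - inverse q * a (n + 1)) / (1 - b n) *
         (if j \<le> n then xfun n q (a, b) c (j + 1)
          else q * c * ((b n - a (n + 1)) / (q - a (n + 1)) * xfun n q (a, b) c 1
                        + (q - b n) / (q - a (n + 1)) * inverse q * inverse c * xfun n q (a, b) c (n + 1)))"
proof (cases "j \<le> n")
  case True
  then show ?thesis
    using xfun_rotate_params[OF assms(2,6)] assms(1,10) by (simp add: divide_inverse mult.commute)
next
  case False
  then have "j = n + 1"
    using assms(10) by simp
  have distrib: "q * c * (\<alpha> * X + \<beta> * inverse q * inverse c * Y) = \<alpha> * (q * c * X) + \<beta> * Y"
    for \<alpha> \<beta> X Y :: complex
    using assms(2,4) by (simp add: field_simps)
  have "inverse q * a (n + 1) = a (n + 1) / q" "\<not> n + 1 \<le> n"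
    by (simp_all add: divide_inverse mult.commute)
  then show ?thesis
    unfolding \<open>j = n + 1\<close>
    by (simp only: if_not_P if_False distrib xfun_rotate_params_last[where a = a and b = b, OF assms(1-3,5-9)])
qed

lemma mat_vec_M_pi1_M_pn:
  assumes "1 \<le> n" "q \<noteq> 0" "b n / q \<notin> \<real>\<^sub>\<le>\<^sub>0" "j \<in> {1..n + 1}"
  shows "mat_vec n (mat_mult n (M_pi1 n q (subst_pn n q (a, b)) c) (M_pn n q (a, b) c)) x j =
         (if j \<le> n then x (j + 1)
          else q * c * ((b n - a (n + 1)) / (q - a (n + 1)) * x 1
                        + (q - b n) / (q - a (n + 1)) * inverse q * inverse c * x (n + 1)))"
proof -
  have "qcpow q c (bfull n q (snd (subst_pn n q (a, b))) n / q) * qcpow q c (b n / q) = 1"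
    using qcpow_inverse[OF assms(3)] assms(2,3) by (auto simp: bfull_def snd_subst_pn field_simps)
  then show ?thesis
    using assms(1,4) by (auto simp: mat_vec_mat_mult mat_vec_M_pi1 mat_vec_M_pn mult.assoc[symmetric])
qed

lemma ne_int_powers_D:
  fixes q x :: complex
  assumes "q \<noteq> 0" "\<forall>m::int. x \<noteq> q powi m"
  shows "x \<noteq> 1" "x \<noteq> q" "1 - q ^ k * x \<noteq> 0"
proof -
  show "x \<noteq> 1" "x \<noteq> q"
    using assms(2) by (metis power_int_0_right, metis power_int_1_right)
  show "1 - q ^ k * x \<noteq> 0"
  proof
    assume "1 - q ^ k * x = 0"
    then have "x = q powi (- int k)"
      using assms(1) by (simp add: power_int_minus field_simps)
    then show False
      using assms(2) by blast
  qed
qed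

theorem lemma4p3:
  fixes n :: nat and q c :: complex and a b :: "nat \<Rightarrow> complex"
  assumes "n \<ge> 1"
    and "q \<noteq> 0" and "norm q < 1"
    and "c \<noteq> 0" and "norm c < 1 / norm q"
    and "\<forall>l\<in>{1..n}. \<forall>m::int. b l \<noteq> q powi m"
    and "a (n + 1) \<noteq> q"
    and "b n / q \<notin> \<real>\<^sub>\<le>\<^sub>0"
    and "j \<in> {1..n + 1}"
  shows "xfun n q (subst_pi1 n q (subst_pn n q (a, b))) c j =
         (1 - inverse q * a (n + 1)) / (1 - b n) *
         mat_vec n (mat_mult n (M_pi1 n q (subst_pn n q (a, b)) c) (M_pn n q (a, b) c))
                   (xfun n q (a, b) c) j"
proof -
  have b_ne_1: "\<And>l. l \<in> {1..n} \<Longrightarrow> b l \<noteq> 1" and "b n \<noteq> q" "\<And>k. 1 - q ^ k * b n \<noteq> 0"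
    using ne_int_powers_D[OF assms(2)] assms(1,6) by auto
  moreover have "b n \<noteq> 0"
    using assms(8) by auto
  moreover have "norm (q * c) < 1"
    using assms(2,5) by (simp add: norm_mult field_simps)
  ultimately have "xfun n q (subst_pi1 n q (subst_pn n q (a, b))) c j = xfun n q (rotate_params n q (a, b)) c j"
    using subst_pi1_subst_pn_eq_rotate_params[where b = b and n = n, OF assms(2) \<open>b n \<noteq> 0\<close>] assms(9)
    by (intro xfun_cong) auto
  also have "\<dots> = (1 - inverse q * a (n + 1)) / (1 - b n) *
      mat_vec n (mat_mult n (M_pi1 n q (subst_pn n q (a, b)) c) (M_pn n q (a, b) c)) (xfun n q (a, b) c) j"
    unfolding mat_vec_M_pi1_M_pn[where b = b, OF assms(1,2,8,9)]
    by (rule xfun_rotate_params_row) (use assms \<open>norm (q * c) < 1\<close> b_ne_1 \<open>b n \<noteq> q\<close>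
        \<open>\<And>k. 1 - q ^ k * b n \<noteq> 0\<close> in auto)
  finally show ?thesis .
qed

end
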